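(* Let $2\le m\le n$ be natural numbers with $n\equiv m \pmod{m-1}$, and let $G\le\operatorname{Sym}(m)$. Then there exists $H\le\operatorname{Sym}(n)$ such that $V_m(G)$ embeds (as a group) in $V_n(H)$.
   Context: For $r\ge 2$ let $\mathcal{A}_r=\{0,1,\dots,r-1\}$, let $\mathcal{A}_r^*$ be the set of finite words over $\mathcal{A}_r$ (including the empty word), and let $\mathfrak{C}_r=\mathcal{A}_r^{\mathbb{N}}$ (infinite words, product topology). For $u\in\mathcal{A}_r^*$ and $v$ a finite or infinite word, $uv$ denotes concatenation, and $u\le_{pref} v$ means $v=uw$ for some word $w$. A (complete) prefix code of $\mathfrak{C}_r$ is a finite set $S\subset\mathcal{A}_r^*$ such that every $\zeta\in\mathfrak{C}_r$ has exactly one $s\in S$ with $s\le_{pref}\zeta$. A permutation $\sigma\in\operatorname{Sym}(r)$ acts on words letterwise: $\sigma(z_1z_2\cdots)=\sigma(z_1)\sigma(z_2)\cdots$. For $H\le\operatorname{Sym}(r)$, the symmetric Thompson group $V_r(H)$ is the group (under composition) of homeomorphisms of $\mathfrak{C}_r$ described by tables: two prefix codes $P=\{p_1,\dots,p_k\}$ and $Q=\{q_1,\dots,q_k\}$ of $\mathfrak{C}_r$ of the same size together with $\sigma_i,\tau_i\in H$, describing the homeomorphism $p_i\,\sigma_i(u)\mapsto q_i\,\tau_i(u)$ for all $u\in\mathfrak{C}_r$ and all $i$. *)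

theory Defs
  imports "HOL-Combinatorics.Permutations" "HOL-Algebra.Group"
begin

definition fwords :: "nat \<Rightarrow> nat list set" where
  "fwords r = {u. \<forall>a\<in>set u. a < r}"

definition cantor :: "nat \<Rightarrow> (nat \<Rightarrow> nat) set" where
  "cantor r = {z. \<forall>i. z i < r}"

definition cat :: "nat list \<Rightarrow> (nat \<Rightarrow> nat) \<Rightarrow> (nat \<Rightarrow> nat)" where
  "cat u z = (\<lambda>i. if i < length u then u ! i else z (i - length u))"

definition is_prefix :: "nat list \<Rightarrow> (nat \<Rightarrow> nat) \<Rightarrow> bool" where
  "is_prefix u z \<longleftrightarrow> (\<forall>i<length u. z i = u ! i)"

definition prefix_code :: "nat \<Rightarrow> nat list set \<Rightarrow> bool" where
  "prefix_code r S \<longleftrightarrow> finite S \<and> S \<subseteq> fwords r \<and>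
     (\<forall>z\<in>cantor r. \<exists>!s. s \<in> S \<and> is_prefix s z)"

definition symA :: "nat \<Rightarrow> (nat \<Rightarrow> nat) monoid" where
  "symA r = \<lparr>carrier = {s. s permutes {..<r}}, mult = (\<circ>), one = id\<rparr>"

(* V_r(H): homeomorphisms of C_r given by tables (P, Q, sigma_i, tau_i),
   mapping p_i sigma_i(u) to q_i tau_i(u); represented as maps on nat sequences
   that are the identity outside C_r (so that composition is the group law). *)
definition Vset :: "nat \<Rightarrow> (nat \<Rightarrow> nat) set \<Rightarrow> ((nat \<Rightarrow> nat) \<Rightarrow> (nat \<Rightarrow> nat)) set" where
  "Vset r H = {f. \<exists>(k::nat) (p::nat \<Rightarrow> nat list) (q::nat \<Rightarrow> nat list)
                   (\<sigma>::nat \<Rightarrow> nat \<Rightarrow> nat) (\<tau>::nat \<Rightarrow> nat \<Rightarrow> nat).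
       inj_on p {..<k} \<and> inj_on q {..<k} \<and>
       prefix_code r (p ` {..<k}) \<and> prefix_code r (q ` {..<k}) \<and>
       (\<forall>i<k. \<sigma> i \<in> H \<and> \<tau> i \<in> H) \<and>
       (\<forall>i<k. \<forall>u\<in>cantor r. f (cat (p i) (\<sigma> i \<circ> u)) = cat (q i) (\<tau> i \<circ> u)) \<and>
       (\<forall>z. z \<notin> cantor r \<longrightarrow> f z = z)}"

definition Vgrp :: "nat \<Rightarrow> (nat \<Rightarrow> nat) set \<Rightarrow> ((nat \<Rightarrow> nat) \<Rightarrow> (nat \<Rightarrow> nat)) monoid" where
  "Vgrp r H = \<lparr>carrier = Vset r H, mult = (\<circ>), one = id\<rparr>"

end

theory Submission
  imports Defs "HOL-Algebra.Sym_Groups"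
begin

(* Write n = 1 + d (m - 1).  A cell is a family of d pairwise incomparable words of the n-ary tree.
   Replacing the first word of a cell by its n children gives n + d - 1 = m d words, that is, m new
   cells; iterating, the cones below a cell carry a copy of the m-ary Cantor space in which moving the
   subcone of one cell to that of another is an n-ary prefix replacement.  Take one such copy for each
   g in G and store the point z in it as g o z.  A table entry f (a v) = b (rho v) of f in V_m(G) then
   sends the cell labelled a in copy g to the cell labelled b in copy g o rho^-1: the permutation rho
   is absorbed by the change of copy.  So f acts on the union of the copies by prefix replacements
   alone, and extending by the identity on the rest of C_n embeds V_m(G) into V_n(1). *)

lemma is_prefix_appendD: "is_prefix (u @ v) y \<Longrightarrow> is_prefix u y"
  by (auto simp: is_prefix_def nth_append)

lemma is_prefix_snoc_iff: "is_prefix (u @ [b]) y \<longleftrightarrow> is_prefix u y \<and> y (length u) = b"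
  by (auto simp: is_prefix_def nth_append less_Suc_eq)

lemma is_prefix_cat: "is_prefix u (cat u z)"
  by (auto simp: is_prefix_def cat_def)

lemma cat_prefix_suffix: "is_prefix u y \<Longrightarrow> cat u (\<lambda>i. y (i + length u)) = y"
  by (auto simp: is_prefix_def cat_def fun_eq_iff)

lemma suffix_cat: "(\<lambda>i. cat u z (i + length u)) = z"
  by (auto simp: cat_def fun_eq_iff)

lemma cat_append: "cat (u @ v) z = cat u (cat v z)"
  by (auto simp: cat_def fun_eq_iff nth_append)

lemma comp_cat: "g \<circ> cat u z = cat (map g u) (g \<circ> z)"
  by (auto simp: cat_def fun_eq_iff)

lemma cat_in_cantor: "u \<in> fwords r \<Longrightarrow> z \<in> cantor r \<Longrightarrow> cat u z \<in> cantor r"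
  by (auto simp: cat_def cantor_def fwords_def)

lemma is_prefix_same_length: "is_prefix u z \<Longrightarrow> is_prefix v z \<Longrightarrow> length u = length v \<Longrightarrow> u = v"
  by (auto simp: is_prefix_def intro: nth_equalityI)

lemma is_prefix_take:
  "is_prefix u z \<Longrightarrow> is_prefix v z \<Longrightarrow> length u \<le> length v \<Longrightarrow> u = take (length u) v"
  by (auto simp: is_prefix_def intro!: nth_equalityI)

lemma is_prefix_append_drop:
  "is_prefix u z \<Longrightarrow> is_prefix v z \<Longrightarrow> length u \<le> length v \<Longrightarrow> v = u @ drop (length u) v"
  by (metis append_take_drop_id is_prefix_take)

lemma cat_const_cancel:
  assumes "cat u (\<lambda>_. a) = cat v (\<lambda>_. a')" "cat u (\<lambda>_. b) = cat v (\<lambda>_. b')" "a \<noteq> b" "a' \<noteq> b'"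
  shows "u = v \<and> a = a'"
proof -
  have at: "cat u (\<lambda>_. a) i = cat v (\<lambda>_. a') i" "cat u (\<lambda>_. b) i = cat v (\<lambda>_. b') i" for i
    using assms(1,2) by simp_all
  have "length u = length v"
    using at[of "length u"] at[of "length v"] assms(3,4) by (auto simp: cat_def split: if_splits)
  moreover have "u ! i = v ! i" if "i < length u" for i
    using at[of i] that \<open>length u = length v\<close> by (simp add: cat_def)
  ultimately show ?thesis
    using at[of "length u"] by (simp add: cat_def nth_equalityI)
qed

lemma cat_cancel: "2 \<le> r \<Longrightarrow> (\<forall>t\<in>cantor r. cat u t = cat v t) \<Longrightarrow> u = v"
  using cat_const_cancel[of u 0 v 0 1 1] by (auto simp: cantor_def)

lemma cat_permutes_cancel:
  assumes "\<rho> permutes {..<r}" "\<rho>' permutes {..<r}" "2 \<le> r"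
    and "\<forall>v\<in>cantor r. cat u (\<rho> \<circ> v) = cat u' (\<rho>' \<circ> v)"
  shows "u = u' \<and> \<rho> = \<rho>'"
proof -
  have const: "cat u (\<lambda>_. \<rho> c) = cat u' (\<lambda>_. \<rho>' c)" if "c < r" for c
    using assms(4) that by (auto simp: cantor_def comp_def)
  have "\<rho> 0 \<noteq> \<rho> 1" "\<rho>' 0 \<noteq> \<rho>' 1"
    using assms(1,2) by (metis permutes_inverses(2) zero_neq_one)+
  then have u: "u = u'"
    using cat_const_cancel[OF const[of 0] const[of 1]] assms(3) by simp
  have "\<rho> c = \<rho>' c" for c
  proof (cases "c < r")
    case True
    then show ?thesis using fun_cong[OF const[OF True], of "length u"] u by (simp add: cat_def)
  next
    case False
    then show ?thesis using assms(1,2) by (simp add: permutes_def)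
  qed
  then show ?thesis using u by auto
qed

lemma prefix_code_unique:
  "prefix_code r S \<Longrightarrow> z \<in> cantor r \<Longrightarrow> s \<in> S \<Longrightarrow> s' \<in> S \<Longrightarrow> is_prefix s z \<Longrightarrow> is_prefix s' z \<Longrightarrow> s = s'"
  unfolding prefix_code_def by blast

lemma is_prefix_replicate_iff: "is_prefix (replicate i 0) z \<longleftrightarrow> (\<forall>l<i. z l = 0)"
  by (auto simp: is_prefix_def)

lemma is_prefix_replicate_snoc_iff:
  "is_prefix (replicate i 0 @ [b]) z \<longleftrightarrow> (\<forall>l<i. z l = 0) \<and> z i = b"
  by (auto simp: is_prefix_def nth_append less_Suc_eq)

lemma replicate_snoc_prefix_unique:
  "is_prefix (replicate i 0 @ [b]) z \<Longrightarrow> is_prefix (replicate i' 0 @ [b']) z \<Longrightarrow> 0 < b \<Longrightarrow> 0 < b'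
   \<Longrightarrow> i = i' \<and> b = b'"
  unfolding is_prefix_replicate_snoc_iff by (metis linorder_neqE_nat less_numeral_extra(3))

lemma replicate_snoc_prefix_replicate:
  "is_prefix (replicate i 0 @ [b]) z \<Longrightarrow> is_prefix (replicate N 0) z \<Longrightarrow> 0 < b \<Longrightarrow> N \<le> i"
  unfolding is_prefix_replicate_snoc_iff is_prefix_replicate_iff by (metis not_le less_numeral_extra(3))

lemma group_symA: "group (symA r)"
proof (rule groupI)
  fix g assume "g \<in> carrier (symA r)"
  then have "inv' g \<in> carrier (symA r) \<and> inv' g \<otimes>\<^bsub>symA r\<^esub> g = \<one>\<^bsub>symA r\<^esub>"
    by (simp add: symA_def permutes_inv permutes_inv_o)
  then show "\<exists>h\<in>carrier (symA r). h \<otimes>\<^bsub>symA r\<^esub> g = \<one>\<^bsub>symA r\<^esub>" by blast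
qed (auto simp: symA_def permutes_compose comp_assoc)

lemma symA_inv: "g permutes {..<r} \<Longrightarrow> inv\<^bsub>symA r\<^esub> g = inv' g"
  by (rule group.inv_equality[OF group_symA]) (simp_all add: symA_def permutes_inv permutes_inv_o)

lemma finite_subgroup_symA: "subgroup G (symA r) \<Longrightarrow> finite G"
proof -
  assume "subgroup G (symA r)"
  then have "G \<subseteq> {g. g permutes {..<r}}"
    using subgroup.subset by (fastforce simp: symA_def)
  then show "finite G"
    using finite_permutations[of "{..<r}"] finite_subset by blast
qed

lemma subgroup_trivial_symA: "subgroup {id} (symA r)"
  using group.triv_subgroup[OF group_symA] by (simp add: symA_def)

lemma Vset_outside: "f \<in> Vset r H \<Longrightarrow> z \<notin> cantor r \<Longrightarrow> f z = z"
  by (auto simp: Vset_def)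

lemma inj_on_fst_pairs_Un_diag:
  assumes "inj_on P A" "P ` A \<inter> C = {}"
  shows "inj_on fst ((\<lambda>x. (P x, Q x)) ` A \<union> (\<lambda>c. (c, c)) ` C)"
proof (rule inj_onI)
  fix u v
  assume "u \<in> (\<lambda>x. (P x, Q x)) ` A \<union> (\<lambda>c. (c, c)) ` C" "v \<in> (\<lambda>x. (P x, Q x)) ` A \<union> (\<lambda>c. (c, c)) ` C"
    and "fst u = fst v"
  then show "u = v"
    using assms by (elim UnE imageE) (auto simp: inj_on_eq_iff)
qed

lemma inj_on_snd_pairs_Un_diag:
  assumes "inj_on Q A" "Q ` A \<inter> C = {}"
  shows "inj_on snd ((\<lambda>x. (P x, Q x)) ` A \<union> (\<lambda>c. (c, c)) ` C)"
proof (rule inj_onI)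
  fix u v
  assume "u \<in> (\<lambda>x. (P x, Q x)) ` A \<union> (\<lambda>c. (c, c)) ` C" "v \<in> (\<lambda>x. (P x, Q x)) ` A \<union> (\<lambda>c. (c, c)) ` C"
    and "snd u = snd v"
  then show "u = v"
    using assms by (elim UnE imageE) (auto simp: inj_on_eq_iff)
qed

lemma Vset_intro_pairs:
  assumes "finite E" "inj_on fst E" "inj_on snd E" "prefix_code r (fst ` E)" "prefix_code r (snd ` E)"
    and "id \<in> H"
    and "\<And>P Q u. (P, Q) \<in> E \<Longrightarrow> u \<in> cantor r \<Longrightarrow> F (cat P u) = cat Q u"
    and "\<And>z. z \<notin> cantor r \<Longrightarrow> F z = z"
  shows "F \<in> Vset r H"
proof -
  obtain e where "bij_betw e {..<card E} E"
    using ex_bij_betw_nat_finite[OF assms(1)] by (auto simp: lessThan_atLeast0)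
  then have e: "inj_on e {..<card E}" "e ` {..<card E} = E"
    by (simp_all add: bij_betw_def)
  have "inj_on (fst \<circ> e) {..<card E}" "inj_on (snd \<circ> e) {..<card E}"
    using comp_inj_on[OF e(1)] assms(2,3) e(2) by simp_all
  moreover have "(fst \<circ> e) ` {..<card E} = fst ` E" "(snd \<circ> e) ` {..<card E} = snd ` E"
    unfolding image_comp[symmetric] e(2) by (rule refl)+
  moreover have "F (cat ((fst \<circ> e) i) (id \<circ> u)) = cat ((snd \<circ> e) i) (id \<circ> u)"
    if "i < card E" "u \<in> cantor r" for i u
    using assms(7)[of "fst (e i)" "snd (e i)" u] e(2) that by auto
  ultimately show ?thesis
    unfolding Vset_def using assms(4-6,8)
    by (intro CollectI exI[of _ "card E"] exI[of _ "fst \<circ> e"] exI[of _ "snd \<circ> e"] exI[of _ "\<lambda>_. id"]) auto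
qed

section \<open>Cells\<close>

(* The cell w consists of the d words w 0, ..., w (d - 1).  Listing w 1, ..., w (d - 1) followed by
   the n children w 0 @ [b] gives n + d - 1 = m d words; cell_step d w c is the c-th block of d of them. *)

definition cell_step :: "nat \<Rightarrow> (nat \<Rightarrow> nat list) \<Rightarrow> nat \<Rightarrow> nat \<Rightarrow> nat list" where
  "cell_step d w c j =
     (if c * d + j < d - 1 then w (c * d + j + 1) else w 0 @ [c * d + j - (d - 1)])"

definition cell :: "nat \<Rightarrow> (nat \<Rightarrow> nat list) \<Rightarrow> nat list \<Rightarrow> nat \<Rightarrow> nat list" where
  "cell d w x = foldl (cell_step d) w x"

lemma cell_Nil [simp]: "cell d w [] = w"
  by (simp add: cell_def)

lemma cell_snoc: "cell d w (x @ [c]) = cell_step d (cell d w x) c"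
  by (simp add: cell_def)

definition parent_index :: "nat \<Rightarrow> nat \<Rightarrow> nat" where
  "parent_index d e = (if e < d - 1 then e + 1 else 0)"

lemma parent_index_less: "0 < d \<Longrightarrow> parent_index d e < d"
  by (auto simp: parent_index_def)

lemma cell_step_parent:
  "is_prefix (cell_step d w c j) y \<Longrightarrow> is_prefix (w (parent_index d (c * d + j))) y"
  by (auto simp: cell_step_def parent_index_def dest: is_prefix_appendD)

lemma cell_parent:
  assumes "0 < d" "j < d" "is_prefix (cell d w (x @ x') j) y"
  shows "\<exists>j'<d. is_prefix (cell d w x j') y"
  using assms(2,3)
proof (induction x' arbitrary: j rule: rev_induct)
  case Nil
  then show ?case by auto
next
  case (snoc c x')
  then show ?case
    using cell_step_parent[of d "cell d w (x @ x')" c j y] parent_index_less[OF assms(1)]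
    by (metis cell_snoc append_assoc)
qed

definition separated :: "nat \<Rightarrow> (nat \<Rightarrow> nat list) \<Rightarrow> bool" where
  "separated d w \<longleftrightarrow>
     (\<forall>y j j'. j < d \<longrightarrow> j' < d \<longrightarrow> is_prefix (w j) y \<longrightarrow> is_prefix (w j') y \<longrightarrow> j = j')"

lemma mult_add_less_cancel:
  fixes c c' j j' d :: nat
  assumes "j < d" "j' < d" "c * d + j = c' * d + j'"
  shows "c = c' \<and> j = j'"
proof -
  have "j = (c * d + j) mod d" "j' = (c' * d + j') mod d"
    using assms(1,2) by simp_all
  then have "j = j'"
    using assms(3) by simp
  then show ?thesis
    using assms by simp
qed

lemma cell_unique:
  assumes "separated d w" "0 < d"
    and "is_prefix (cell d w x j) y" "is_prefix (cell d w x' j') y" "length x = length x'" "j < d" "j' < d"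
  shows "x = x' \<and> j = j'"
  using assms(3-)
proof (induction x arbitrary: x' j j' rule: rev_induct)
  case Nil
  then show ?case using assms(1) unfolding separated_def by auto
next
  case (snoc c x)
  obtain x'' c' where x': "x' = x'' @ [c']"
    using snoc.prems(3) by (metis length_0_conv snoc_eq_iff_butlast)
  define e where "e = c * d + j"
  define e' where "e' = c' * d + j'"
  have step: "is_prefix (cell_step d (cell d w x) c j) y" "is_prefix (cell_step d (cell d w x'') c' j') y"
    using snoc.prems(1,2) x' by (simp_all add: cell_snoc)
  have "x = x'' \<and> parent_index d e = parent_index d e'"
    using snoc.IH[OF step(1)[THEN cell_step_parent] step(2)[THEN cell_step_parent]]
      snoc.prems(3) x' parent_index_less[OF assms(2)] e_def e'_def by simp
  then have x: "x = x''" and parent: "parent_index d e = parent_index d e'" by auto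
  have "e = e'"
  proof (cases "e < d - 1")
    case True
    then show ?thesis using parent by (auto simp: parent_index_def split: if_splits)
  next
    case False
    then have "\<not> e' < d - 1" using parent by (auto simp: parent_index_def split: if_splits)
    then have "y (length (cell d w x 0)) = e' - (d - 1)"
      using step(2) x unfolding cell_step_def e'_def[symmetric] by (simp add: is_prefix_snoc_iff)
    moreover have "y (length (cell d w x 0)) = e - (d - 1)"
      using step(1) False unfolding cell_step_def e_def[symmetric] by (simp add: is_prefix_snoc_iff)
    ultimately show ?thesis using False \<open>\<not> e' < d - 1\<close> by simp
  qed
  then have "c = c' \<and> j = j'"
    using mult_add_less_cancel[OF snoc.prems(4,5)] e_def e'_def by simp
  then show ?case using x x' by simp
qed

lemma cell_inj:
  assumes "separated d w" "0 < d" "\<forall>j<d. cell d w x j = cell d w x' j"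
  shows "x = x'"
proof -
  have same_length: "u = u'" if "length u = length u'" "cell d w u 0 = cell d w u' 0" for u u'
    using cell_unique[OF assms(1,2) is_prefix_cat, of u 0 u' 0] that assms(2) by (simp add: is_prefix_cat)
  have not_shorter: False if shorter: "length u < length u'" and eq: "\<forall>j<d. cell d w u j = cell d w u' j"
    for u u'
  proof -
    define p where "p = take (length u) u'"
    obtain c s where u': "u' = p @ c # s"
      using id_take_nth_drop[OF shorter] p_def by blast
    have "is_prefix (cell d w (p @ c # s) 0) (cat (cell d w u 0) (\<lambda>_. 0))"
      using eq u' assms(2) by (simp add: is_prefix_cat)
    then obtain j where "j < d" "is_prefix (cell d w p j) (cat (cell d w u 0) (\<lambda>_. 0))"
      using cell_parent[OF assms(2,2)] by blast
    then have p: "p = u"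
      using cell_unique[OF assms(1,2) _ is_prefix_cat, of p j u 0] assms(2) p_def shorter by simp
    define y where "y = cat (cell d w (u @ [Suc c]) 0) (\<lambda>_. 0)"
    obtain j where "j < d" "is_prefix (cell d w u j) y"
      using cell_parent[OF assms(2,2), of w u "[Suc c]"] is_prefix_cat y_def by blast
    then have "is_prefix (cell d w ((u @ [c]) @ s) j) y"
      using eq u' p by simp
    then obtain j' where "j' < d" "is_prefix (cell d w (u @ [c]) j') y"
      using cell_parent[OF assms(2) \<open>j < d\<close>] by blast
    then show False
      using cell_unique[OF assms(1,2) _ is_prefix_cat, of "u @ [c]" j' "u @ [Suc c]" 0] assms(2) y_def
      by simp
  qed
  have "length x = length x'"
    using not_shorter[of x x'] not_shorter[of x' x] assms(3) by (metis linorder_neqE_nat)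
  then show ?thesis
    using same_length assms(2,3) by blast
qed

definition cell_index :: "nat \<Rightarrow> (nat \<Rightarrow> nat list) \<Rightarrow> nat list \<Rightarrow> (nat \<Rightarrow> nat) \<Rightarrow> nat" where
  "cell_index d w x y = (THE j. j < d \<and> is_prefix (cell d w x j) y)"

definition cell_transfer ::
  "nat \<Rightarrow> (nat \<Rightarrow> nat list) \<Rightarrow> nat list \<Rightarrow> (nat \<Rightarrow> nat list) \<Rightarrow> nat list \<Rightarrow> (nat \<Rightarrow> nat) \<Rightarrow> nat \<Rightarrow> nat"
  where "cell_transfer d w x w' x' y =
    cat (cell d w' x' (cell_index d w x y)) (\<lambda>i. y (i + length (cell d w x (cell_index d w x y))))"

lemma cell_index_eq:
  "separated d w \<Longrightarrow> 0 < d \<Longrightarrow> j < d \<Longrightarrow> is_prefix (cell d w x j) y \<Longrightarrow> cell_index d w x y = j"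
  unfolding cell_index_def by (rule the_equality) (use cell_unique in blast)+

lemma cell_transfer_eq:
  "separated d w \<Longrightarrow> 0 < d \<Longrightarrow> j < d \<Longrightarrow> is_prefix (cell d w x j) y \<Longrightarrow>
   cell_transfer d w x w' x' y = cat (cell d w' x' j) (\<lambda>i. y (i + length (cell d w x j)))"
  by (simp add: cell_transfer_def cell_index_eq)

lemma cell_transfer_snoc:
  assumes "separated d w" "0 < d" "j < d" "is_prefix (cell d w (x @ [c]) j) y"
  shows "cell_transfer d w (x @ [c]) w' (x' @ [c]) y = cell_transfer d w x w' x' y"
proof -
  have lhs: "cell_transfer d w (x @ [c]) w' (x' @ [c]) y =
      cat (cell d w' (x' @ [c]) j) (\<lambda>i. y (i + length (cell d w (x @ [c]) j)))"
    using cell_transfer_eq[OF assms] .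
  show ?thesis
  proof (cases "c * d + j < d - 1")
    case True
    have "cell d w (x @ [c]) j = cell d w x (c * d + j + 1)"
      "cell d w' (x' @ [c]) j = cell d w' x' (c * d + j + 1)"
      using True by (simp_all add: cell_snoc cell_step_def)
    moreover have "c * d + j + 1 < d"
      using True by arith
    ultimately show ?thesis
      using assms lhs by (simp add: cell_transfer_eq)
  next
    case False
    define b where "b = c * d + j - (d - 1)"
    have cells: "cell d w (x @ [c]) j = cell d w x 0 @ [b]" "cell d w' (x' @ [c]) j = cell d w' x' 0 @ [b]"
      using False by (simp_all add: cell_snoc cell_step_def b_def)
    then have prefix: "is_prefix (cell d w x 0) y" and next_letter: "y (length (cell d w x 0)) = b"
      using assms(4) by (simp_all add: is_prefix_snoc_iff)
    have "cat [b] (\<lambda>i. y (i + length (cell d w x 0 @ [b]))) = (\<lambda>i. y (i + length (cell d w x 0)))"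
      using next_letter by (auto simp: fun_eq_iff cat_def)
    then show ?thesis
      using lhs cells cell_transfer_eq[OF assms(1,2) _ prefix] assms(2) by (simp add: cat_append)
  qed
qed

lemma cell_transfer_append:
  assumes "separated d w" "0 < d" "j < d" "is_prefix (cell d w (x @ s) j) y"
  shows "cell_transfer d w (x @ s) w' (x' @ s) y = cell_transfer d w x w' x' y"
  using assms(3,4)
proof (induction s arbitrary: j rule: rev_induct)
  case Nil
  then show ?case by simp
next
  case (snoc c s)
  obtain j' where "j' < d" "is_prefix (cell d w (x @ s) j') y"
    using cell_parent[OF assms(2) snoc.prems(1), of w "x @ s" "[c]"] snoc.prems(2) by auto
  then show ?case
    using cell_transfer_snoc[OF assms(1,2) snoc.prems(1), of "x @ s" c y w' "x' @ s"] snoc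
    by simp
qed

section \<open>Decoding the m-ary tree of cells\<close>

locale cell_code =
  fixes m n d :: nat
  assumes two_le_m: "2 \<le> m" and n_eq: "n = Suc (d * (m - 1))" and d_pos: "0 < d"

begin

lemma two_le_n: "2 \<le> n"
  using n_eq two_le_m d_pos by (simp add: Suc_le_eq)

lemma cell_step_fwords:
  assumes "\<forall>j<d. w j \<in> fwords n" "c < m" "j < d"
  shows "cell_step d w c j \<in> fwords n"
proof (cases "c * d + j < d - 1")
  case True
  then show ?thesis using assms(1) by (simp add: cell_step_def)
next
  case False
  have "c * d \<le> (m - 1) * d"
    using assms(2) by (intro mult_le_mono1) simp
  then have "c * d + j - (d - 1) \<le> (m - 1) * d"
    using assms(3) by arith
  then have "c * d + j - (d - 1) < n"
    using n_eq by (simp add: mult.commute)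
  then show ?thesis
    using assms(1) False d_pos by (auto simp: cell_step_def fwords_def)
qed

lemma cell_fwords:
  "\<forall>j<d. w j \<in> fwords n \<Longrightarrow> x \<in> fwords m \<Longrightarrow> j < d \<Longrightarrow> cell d w x j \<in> fwords n"
proof (induction x arbitrary: j rule: rev_induct)
  case Nil
  then show ?case by simp
next
  case (snoc c x)
  then show ?case
    using cell_step_fwords[of "cell d w x" c j] by (simp add: cell_snoc fwords_def)
qed

lemma cell_exists:
  assumes "y \<in> cantor n" "\<exists>j<d. is_prefix (w j) y"
  shows "\<exists>x j. x \<in> fwords m \<and> length x = k \<and> j < d \<and> is_prefix (cell d w x j) y"
proof (induction k)
  case 0
  then show ?case using assms(2) by (auto simp: fwords_def)
next
  case (Suc k)
  then obtain x j where x: "x \<in> fwords m" "length x = k" "j < d" "is_prefix (cell d w x j) y"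
    by blast
  show ?case
  proof (cases "j = 0")
    case False
    then have "0 * d + (j - 1) < d - 1"
      using x(3) by arith
    then have "cell d w (x @ [0]) (j - 1) = cell d w x j"
      using False by (simp add: cell_snoc cell_step_def)
    then show ?thesis
      using x False two_le_m by (intro exI[of _ "x @ [0]"] exI[of _ "j - 1"]) (auto simp: fwords_def)
  next
    case True
    (* the child b of cell d w x 0 is entry b + (d - 1) of the expanded family *)
    define b where "b = y (length (cell d w x 0))"
    define e where "e = b + (d - 1)"
    have "b < n"
      using assms(1) by (simp add: cantor_def b_def)
    moreover have "d * m = d * (m - 1) + d"
      using two_le_m by (cases m) simp_all
    ultimately have "e < m * d"
      using n_eq e_def d_pos by (simp add: mult.commute)
    then have c: "e div d < m"
      using d_pos by (simp add: div_less_iff_less_mult)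
    have "cell d w (x @ [e div d]) (e mod d) = cell d w x 0 @ [b]"
      unfolding cell_snoc cell_step_def div_mult_mod_eq using e_def by simp
    then show ?thesis
      using x True c d_pos is_prefix_snoc_iff[of "cell d w x 0" b y] b_def
      by (intro exI[of _ "x @ [e div d]"] exI[of _ "e mod d"]) (auto simp: fwords_def)
  qed
qed

definition covered :: "(nat \<Rightarrow> nat list) \<Rightarrow> (nat \<Rightarrow> nat) \<Rightarrow> bool" where
  "covered w y \<longleftrightarrow> y \<in> cantor n \<and> (\<exists>j<d. is_prefix (w j) y) \<and> separated d w"

definition level_word :: "(nat \<Rightarrow> nat list) \<Rightarrow> (nat \<Rightarrow> nat) \<Rightarrow> nat \<Rightarrow> nat list" where
  "level_word w y k = (SOME x. \<exists>j<d. x \<in> fwords m \<and> length x = k \<and> is_prefix (cell d w x j) y)"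

definition decode_path :: "(nat \<Rightarrow> nat list) \<Rightarrow> (nat \<Rightarrow> nat) \<Rightarrow> nat \<Rightarrow> nat" where
  "decode_path w y i = level_word w y (Suc i) ! i"

lemma level_word_cell:
  assumes "covered w y"
  shows "\<exists>j<d. level_word w y k \<in> fwords m \<and> length (level_word w y k) = k \<and>
    is_prefix (cell d w (level_word w y k) j) y"
proof -
  have "\<exists>x j. j < d \<and> x \<in> fwords m \<and> length x = k \<and> is_prefix (cell d w x j) y"
    using cell_exists assms unfolding covered_def by blast
  then show ?thesis
    unfolding level_word_def by (rule someI_ex)
qed

lemma level_word_unique:
  "covered w y \<Longrightarrow> j < d \<Longrightarrow> is_prefix (cell d w x j) y \<Longrightarrow> x = level_word w y (length x)"
  using level_word_cell[of w y "length x"] cell_unique[OF _ d_pos, of w x j y] unfolding covered_def by metis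

lemma level_word_take:
  assumes "covered w y" "k \<le> k'"
  shows "level_word w y k = take k (level_word w y k')"
proof -
  obtain j where j: "j < d" "is_prefix (cell d w (level_word w y k') j) y"
    and len: "length (level_word w y k') = k'"
    using level_word_cell[OF assms(1)] by blast
  then obtain j' where "j' < d" "is_prefix (cell d w (take k (level_word w y k')) j') y"
    using cell_parent[OF d_pos j(1), of w "take k (level_word w y k')" "drop k (level_word w y k')"]
    by auto
  then have "take k (level_word w y k') = level_word w y (length (take k (level_word w y k')))"
    using level_word_unique[OF assms(1)] by blast
  then show ?thesis
    using assms(2) len by simp
qed

lemma level_word_prefix:
  assumes "covered w y"
  shows "is_prefix (level_word w y k) (decode_path w y)"
proof -
  have "decode_path w y i = level_word w y k ! i" if "i < k" for i
    using level_word_take[OF assms, of "Suc i" k] that by (simp add: decode_path_def)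
  moreover have "length (level_word w y k) = k"
    using level_word_cell[OF assms] by blast
  ultimately show ?thesis
    by (simp add: is_prefix_def)
qed

lemma decode_path_cantor:
  assumes "covered w y"
  shows "decode_path w y \<in> cantor m"
proof -
  have "decode_path w y i < m" for i
    using level_word_cell[OF assms, of "Suc i"] by (auto simp: decode_path_def fwords_def)
  then show ?thesis
    by (simp add: cantor_def)
qed

lemma cell_prefix_iff_decode_prefix:
  assumes "covered w y" "x \<in> fwords m"
  shows "(\<exists>j<d. is_prefix (cell d w x j) y) \<longleftrightarrow> is_prefix x (decode_path w y)"
proof
  assume "\<exists>j<d. is_prefix (cell d w x j) y"
  then show "is_prefix x (decode_path w y)"
    using level_word_unique[OF assms(1)] level_word_prefix[OF assms(1)] by metis
next
  assume "is_prefix x (decode_path w y)"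
  then have "x = level_word w y (length x)"
    using is_prefix_same_length level_word_prefix[OF assms(1)] level_word_cell[OF assms(1)] by metis
  then show "\<exists>j<d. is_prefix (cell d w x j) y"
    using level_word_cell[OF assms(1), of "length x"] by metis
qed

end

section \<open>One copy of the code for each element of G\<close>

definition root_word :: "nat \<Rightarrow> nat list" where
  "root_word i = replicate i 0 @ [1]"

locale copy_embedding = cell_code +
  fixes G :: "(nat \<Rightarrow> nat) set" and ix :: "(nat \<Rightarrow> nat) \<Rightarrow> nat"
  assumes subgroup_G: "subgroup G (symA m)" and ix_bij: "bij_betw ix G {..<card G}"

begin

lemma G_permutes: "g \<in> G \<Longrightarrow> g permutes {..<m}"
  using subgroup.subset[OF subgroup_G] by (auto simp: symA_def)

lemma id_in_G: "id \<in> G"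
  using subgroup.one_closed[OF subgroup_G] by (simp add: symA_def)

lemma G_comp: "g \<in> G \<Longrightarrow> h \<in> G \<Longrightarrow> g \<circ> h \<in> G"
  using subgroup.m_closed[OF subgroup_G, of g h] by (simp add: symA_def)

lemma G_inv: "g \<in> G \<Longrightarrow> inv' g \<in> G"
  using subgroup.m_inv_closed[OF subgroup_G, of g] symA_inv[OF G_permutes, of g] by simp

lemma G_inv_comp:
  assumes "g \<in> G"
  shows "g \<circ> inv' g = id" "inv' g \<circ> g = id"
  using permutes_inv_o[OF G_permutes[OF assms]] .

lemma G_inverses:
  assumes "g \<in> G"
  shows "g (inv' g c) = c" "inv' g (g c) = c"
  using permutes_inverses[OF G_permutes[OF assms]] .

lemma G_in_cantor: "g \<in> G \<Longrightarrow> u \<in> cantor m \<Longrightarrow> g \<circ> u \<in> cantor m"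
  using permutes_in_image[OF G_permutes] by (auto simp: cantor_def)

lemma G_in_fwords: "g \<in> G \<Longrightarrow> x \<in> fwords m \<Longrightarrow> map g x \<in> fwords m"
  using permutes_in_image[OF G_permutes] by (auto simp: fwords_def)

lemma is_prefix_map_iff: "g \<in> G \<Longrightarrow> is_prefix (map g x) y \<longleftrightarrow> is_prefix x (inv' g \<circ> y)"
  using G_inverses by (auto simp: is_prefix_def) metis+

lemma finite_G: "finite G"
  using finite_subgroup_symA[OF subgroup_G] .

definition copy_root :: "(nat \<Rightarrow> nat) \<Rightarrow> nat \<Rightarrow> nat list" where
  "copy_root g j = root_word (ix g * d + j)"

(* Copy g stores the point z of C_m as g o z. *)

definition copy_cell :: "(nat \<Rightarrow> nat) \<Rightarrow> nat list \<Rightarrow> nat \<Rightarrow> nat list" where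
  "copy_cell g x j = cell d (copy_root g) (map g x) j"

definition in_copy :: "(nat \<Rightarrow> nat) \<Rightarrow> (nat \<Rightarrow> nat) \<Rightarrow> bool" where
  "in_copy g y \<longleftrightarrow> g \<in> G \<and> y \<in> cantor n \<and> (\<exists>j<d. is_prefix (copy_root g j) y)"

definition decode :: "(nat \<Rightarrow> nat) \<Rightarrow> (nat \<Rightarrow> nat) \<Rightarrow> nat \<Rightarrow> nat" where
  "decode g y = inv' g \<circ> decode_path (copy_root g) y"

lemma copy_root_unique:
  assumes "g \<in> G" "g' \<in> G" "j < d" "j' < d" "is_prefix (copy_root g j) y" "is_prefix (copy_root g' j') y"
  shows "g = g' \<and> j = j'"
proof -
  have "ix g * d + j = ix g' * d + j'"
    using assms(5,6) replicate_snoc_prefix_unique by (simp add: copy_root_def root_word_def)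
  then have "ix g = ix g' \<and> j = j'"
    using mult_add_less_cancel[OF assms(3,4)] by blast
  then show ?thesis
    using ix_bij assms(1,2) by (auto simp: bij_betw_def inj_on_def)
qed

lemma separated_copy_root: "g \<in> G \<Longrightarrow> separated d (copy_root g)"
  unfolding separated_def using copy_root_unique by blast

lemma in_copy_covered: "in_copy g y \<Longrightarrow> covered (copy_root g) y"
  unfolding in_copy_def covered_def using separated_copy_root by blast

lemma in_copy_unique: "in_copy g y \<Longrightarrow> in_copy g' y \<Longrightarrow> g = g'"
  unfolding in_copy_def using copy_root_unique by blast

lemma decode_cantor: "in_copy g y \<Longrightarrow> decode g y \<in> cantor m"
  unfolding decode_def using decode_path_cantor[OF in_copy_covered] G_in_cantor G_inv in_copy_def by blast

lemma copy_cell_prefix_iff: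
  assumes "in_copy g y" "x \<in> fwords m"
  shows "(\<exists>j<d. is_prefix (copy_cell g x j) y) \<longleftrightarrow> is_prefix x (decode g y)"
proof -
  have "g \<in> G"
    using assms(1) by (simp add: in_copy_def)
  then show ?thesis
    unfolding copy_cell_def decode_def
    using cell_prefix_iff_decode_prefix[OF in_copy_covered[OF assms(1)] G_in_fwords[OF _ assms(2)]]
      is_prefix_map_iff by simp
qed

lemma copy_cell_prefix_root:
  "g \<in> G \<Longrightarrow> j < d \<Longrightarrow> is_prefix (copy_cell g x j) y \<Longrightarrow> \<exists>j'<d. is_prefix (copy_root g j') y"
  unfolding copy_cell_def using cell_parent[OF d_pos, of j "copy_root g" "[]"] by simp

lemma in_copy_copy_cell:
  "g \<in> G \<Longrightarrow> j < d \<Longrightarrow> y \<in> cantor n \<Longrightarrow> is_prefix (copy_cell g x j) y \<Longrightarrow> in_copy g y"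
  using copy_cell_prefix_root in_copy_def by blast

lemma copy_cell_fwords: "g \<in> G \<Longrightarrow> x \<in> fwords m \<Longrightarrow> j < d \<Longrightarrow> copy_cell g x j \<in> fwords n"
  unfolding copy_cell_def using two_le_n
  by (intro cell_fwords G_in_fwords) (auto simp: copy_root_def root_word_def fwords_def)

lemma in_copy_cat_copy_cell:
  assumes "g \<in> G" "b \<in> fwords m" "j < d" "t \<in> cantor n"
  shows "in_copy g (cat (copy_cell g b j) t)" "is_prefix b (decode g (cat (copy_cell g b j) t))"
proof -
  show in_copy: "in_copy g (cat (copy_cell g b j) t)"
    using in_copy_copy_cell[OF assms(1,3) cat_in_cantor[OF copy_cell_fwords[OF assms(1-3)] assms(4)]
        is_prefix_cat] .
  show "is_prefix b (decode g (cat (copy_cell g b j) t))"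
    using copy_cell_prefix_iff[OF in_copy assms(2)] assms(3) is_prefix_cat by blast
qed

lemma in_copy_split:
  assumes "in_copy g y" "a \<in> fwords m" "is_prefix a (decode g y)"
  obtains j t where "j < d" "t \<in> cantor n" "y = cat (copy_cell g a j) t"
proof -
  obtain j where j: "j < d" "is_prefix (copy_cell g a j) y"
    using copy_cell_prefix_iff[OF assms(1,2)] assms(3) by blast
  have "(\<lambda>i. y (i + length (copy_cell g a j))) \<in> cantor n"
    using assms(1) by (simp add: in_copy_def cantor_def)
  then show ?thesis
    using that j cat_prefix_suffix[OF j(2)] by metis
qed

lemma copy_cell_inj:
  assumes "g \<in> G" "g' \<in> G" "\<forall>j<d. copy_cell g x j = copy_cell g' x' j"
  shows "g = g' \<and> x = x'"
proof -
  define y where "y = cat (copy_cell g x 0) (\<lambda>_. 0)"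
  have "is_prefix (copy_cell g x 0) y" "is_prefix (copy_cell g' x' 0) y"
    using assms(3) d_pos by (simp_all add: y_def is_prefix_cat)
  then obtain j j' where "j < d" "is_prefix (copy_root g j) y" "j' < d" "is_prefix (copy_root g' j') y"
    using copy_cell_prefix_root[OF assms(1) d_pos] copy_cell_prefix_root[OF assms(2) d_pos] by meson
  then have g: "g = g'"
    using copy_root_unique[OF assms(1,2)] by blast
  then have "map g x = map g x'"
    using cell_inj[OF separated_copy_root[OF assms(1)] d_pos] assms(3) by (simp add: copy_cell_def)
  then show ?thesis
    using g permutes_inj[OF G_permutes[OF assms(1)]] by simp
qed

section \<open>The lifted prefix codes\<close>

definition root_count :: nat where
  "root_count = card G * d"

definition in_copies :: "(nat \<Rightarrow> nat) \<Rightarrow> bool" where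
  "in_copies y \<longleftrightarrow> (\<exists>g\<in>G. \<exists>j<d. is_prefix (copy_root g j) y)"

(* Together with the roots root_word i, i < root_count, these words form a prefix code of C_n. *)

definition outside_code :: "nat list set" where
  "outside_code =
     {replicate i 0 @ [b] | i b. i < root_count \<and> 1 < b \<and> b < n} \<union> {replicate root_count 0}"

lemma in_copy_in_copies: "in_copy g y \<Longrightarrow> in_copies y"
  by (auto simp: in_copy_def in_copies_def)

lemma in_copies_iff_root: "in_copies y \<longleftrightarrow> (\<exists>i<root_count. is_prefix (root_word i) y)"
proof
  assume "in_copies y"
  then obtain g j where g: "g \<in> G" "j < d" "is_prefix (copy_root g j) y"
    unfolding in_copies_def by blast
  have "ix g < card G"
    using ix_bij g(1) by (auto simp: bij_betw_def)
  then have "Suc (ix g) * d \<le> root_count"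
    unfolding root_count_def by (intro mult_le_mono1) simp
  then have "ix g * d + j < root_count"
    using g(2) by simp
  then show "\<exists>i<root_count. is_prefix (root_word i) y"
    using g(3) unfolding copy_root_def by blast
next
  assume "\<exists>i<root_count. is_prefix (root_word i) y"
  then obtain i where i: "i < root_count" "is_prefix (root_word i) y"
    by blast
  then have "i div d < card G"
    using d_pos by (simp add: root_count_def div_less_iff_less_mult)
  then obtain g where "g \<in> G" "ix g = i div d"
    using ix_bij by (metis bij_betw_iff_bijections lessThan_iff)
  then show "in_copies y"
    using i(2) d_pos unfolding in_copies_def copy_root_def
    by (intro bexI[of _ g] exI[of _ "i mod d"]) auto
qed

lemma outside_code_cover:
  assumes "z \<in> cantor n"
  shows "in_copies z \<or> (\<exists>c\<in>outside_code. is_prefix c z)"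
proof (cases "\<forall>l<root_count. z l = 0")
  case True
  then show ?thesis
    by (auto simp: outside_code_def is_prefix_replicate_iff)
next
  case False
  define i where "i = (LEAST l. z l \<noteq> 0)"
  have zeros: "\<forall>l<i. z l = 0" and nonzero: "z i \<noteq> 0"
    using False not_less_Least LeastI[of "\<lambda>l. z l \<noteq> 0"] unfolding i_def by blast+
  have i: "i < root_count"
    using False zeros by (meson linorder_not_le order_less_le_trans)
  have prefix: "is_prefix (replicate i 0 @ [z i]) z"
    using zeros by (simp add: is_prefix_replicate_snoc_iff)
  show ?thesis
  proof (cases "z i = 1")
    case True
    then show ?thesis
      using i prefix unfolding in_copies_iff_root root_word_def by auto
  next
    case False
    then have "replicate i 0 @ [z i] \<in> outside_code"
      using assms i nonzero by (auto simp: outside_code_def cantor_def)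
    then show ?thesis
      using prefix by blast
  qed
qed

lemma outside_code_cases:
  "c \<in> outside_code \<Longrightarrow>
   (\<exists>i b. i < root_count \<and> 1 < b \<and> c = replicate i 0 @ [b]) \<or> c = replicate root_count 0"
  unfolding outside_code_def by blast

lemma outside_code_not_in_copies:
  assumes "in_copies z" "c \<in> outside_code"
  shows "\<not> is_prefix c z"
proof
  assume c: "is_prefix c z"
  obtain i where i: "i < root_count" "is_prefix (replicate i 0 @ [1]) z"
    using assms(1) unfolding in_copies_iff_root root_word_def by blast
  from outside_code_cases[OF assms(2)] show False
  proof
    assume "\<exists>i' b. i' < root_count \<and> 1 < b \<and> c = replicate i' 0 @ [b]"
    then show False
      using replicate_snoc_prefix_unique[OF i(2)] c by fastforce
  next
    assume "c = replicate root_count 0"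
    then show False
      using replicate_snoc_prefix_replicate[OF i(2), of root_count] c i(1) by simp
  qed
qed

lemma outside_code_unique:
  assumes "c \<in> outside_code" "c' \<in> outside_code" "is_prefix c z" "is_prefix c' z"
  shows "c = c'"
  using outside_code_cases[OF assms(1)] outside_code_cases[OF assms(2)] assms(3,4)
    replicate_snoc_prefix_unique[of _ _ z] replicate_snoc_prefix_replicate[of _ _ z root_count]
  by (metis not_le less_trans zero_less_one)

lemma outside_code_fwords: "outside_code \<subseteq> fwords n"
  using two_le_n by (auto simp: outside_code_def fwords_def)

lemma finite_outside_code: "finite outside_code"
proof -
  have "{replicate i 0 @ [b] | i b. i < root_count \<and> 1 < b \<and> b < n} \<subseteq>
      (\<lambda>(i, b). replicate i 0 @ [b]) ` ({..<root_count} \<times> {..<n})"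
    by auto
  moreover have "finite ((\<lambda>(i, b). replicate i 0 @ [b]) ` ({..<root_count} \<times> {..<n}))"
    by simp
  ultimately have "finite {replicate i 0 @ [b] | i b. i < root_count \<and> 1 < b \<and> b < n}"
    by (rule finite_subset)
  then show ?thesis
    by (simp add: outside_code_def)
qed

definition copy_cells :: "nat list set \<Rightarrow> nat list set" where
  "copy_cells S = (\<lambda>(g, s, j). copy_cell g s j) ` (G \<times> S \<times> {..<d})"

definition copy_code :: "nat list set \<Rightarrow> nat list set" where
  "copy_code S = copy_cells S \<union> outside_code"

lemma copy_cell_in_copy_cells: "g \<in> G \<Longrightarrow> s \<in> S \<Longrightarrow> j < d \<Longrightarrow> copy_cell g s j \<in> copy_cells S"
  by (force simp: copy_cells_def)

lemma copy_cells_cases: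
  assumes "w \<in> copy_cells S"
  obtains g s j where "g \<in> G" "s \<in> S" "j < d" "w = copy_cell g s j"
  using assms by (auto simp: copy_cells_def)

lemma copy_cells_prefix_in_copies: "w \<in> copy_cells S \<Longrightarrow> is_prefix w z \<Longrightarrow> in_copies z"
  by (elim copy_cells_cases) (metis copy_cell_prefix_root in_copies_def)

lemma copy_cell_prefix_unique:
  assumes "prefix_code m S" "s \<in> S" "s' \<in> S" "g \<in> G" "g' \<in> G" "j < d" "j' < d" "z \<in> cantor n"
    and "is_prefix (copy_cell g s j) z" "is_prefix (copy_cell g' s' j') z"
  shows "g = g' \<and> s = s' \<and> j = j'"
proof -
  have fw: "s \<in> fwords m" "s' \<in> fwords m"
    using assms(1-3) by (auto simp: prefix_code_def)
  have z: "in_copy g z" "in_copy g' z"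
    using in_copy_copy_cell assms(4-10) by blast+
  then have g: "g' = g"
    using in_copy_unique by blast
  have "is_prefix s (decode g z)" "is_prefix s' (decode g z)"
    using copy_cell_prefix_iff[OF z(1)] fw assms(6,7,9,10) g by blast+
  then have s: "s' = s"
    using prefix_code_unique[OF assms(1) decode_cantor[OF z(1)] assms(3,2)] by blast
  have "j = j'"
    using cell_unique[OF separated_copy_root[OF assms(4)] d_pos] assms(6,7,9,10) g s
    by (simp add: copy_cell_def)
  then show ?thesis
    using g s by simp
qed

lemma copy_cell_code_inj:
  assumes "prefix_code m S" "s \<in> S" "s' \<in> S" "g \<in> G" "g' \<in> G" "j < d" "j' < d"
    and "copy_cell g s j = copy_cell g' s' j'"
  shows "g = g' \<and> s = s' \<and> j = j'"
proof -
  have "s \<in> fwords m"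
    using assms(1,2) by (auto simp: prefix_code_def)
  then have "cat (copy_cell g s j) (\<lambda>_. 0) \<in> cantor n"
    using cat_in_cantor[OF copy_cell_fwords[OF assms(4) _ assms(6)]] two_le_n by (simp add: cantor_def)
  then show ?thesis
    using copy_cell_prefix_unique[OF assms(1-7)] assms(8) is_prefix_cat by metis
qed

lemma copy_cells_outside_disjoint:
  assumes "S \<subseteq> fwords m"
  shows "copy_cells S \<inter> outside_code = {}"
proof -
  have "copy_cell g s j \<notin> outside_code" if g: "g \<in> G" and j: "j < d" for g s j
  proof
    assume outside: "copy_cell g s j \<in> outside_code"
    define y where "y = cat (copy_cell g s j) (\<lambda>_. 0)"
    obtain j' where "j' < d" "is_prefix (copy_root g j') y"
      using copy_cell_prefix_root[OF g j is_prefix_cat] y_def by blast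
    then have "in_copies y"
      using g in_copies_def by blast
    then show False
      using outside_code_not_in_copies outside is_prefix_cat y_def by blast
  qed
  then show ?thesis
    by (auto simp: copy_cells_def)
qed

lemma copy_code_cover:
  assumes "prefix_code m S" "z \<in> cantor n"
  shows "\<exists>w\<in>copy_code S. is_prefix w z"
proof (cases "in_copies z")
  case True
  then obtain g where g: "in_copy g z"
    using assms(2) by (auto simp: in_copies_def in_copy_def)
  obtain s where s: "s \<in> S" "is_prefix s (decode g z)"
    using assms(1) decode_cantor[OF g] unfolding prefix_code_def by blast
  moreover have "s \<in> fwords m"
    using assms(1) s(1) by (auto simp: prefix_code_def)
  ultimately obtain j where "j < d" "is_prefix (copy_cell g s j) z"
    using copy_cell_prefix_iff[OF g] by blast
  then show ?thesis
    using g s(1) copy_cell_in_copy_cells by (auto simp: copy_code_def in_copy_def)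
next
  case False
  then show ?thesis
    using outside_code_cover[OF assms(2)] by (auto simp: copy_code_def)
qed

lemma copy_code_unique:
  assumes "prefix_code m S" "z \<in> cantor n" "w \<in> copy_code S" "w' \<in> copy_code S"
    and "is_prefix w z" "is_prefix w' z"
  shows "w = w'"
proof -
  consider "w \<in> copy_cells S" "w' \<in> copy_cells S" | "w \<in> outside_code" "w' \<in> outside_code"
    | "w \<in> copy_cells S" "w' \<in> outside_code" | "w \<in> outside_code" "w' \<in> copy_cells S"
    using assms(3,4) by (auto simp: copy_code_def)
  then show ?thesis
  proof cases
    case 1
    obtain g s j g' s' j' where "g \<in> G" "s \<in> S" "j < d" "w = copy_cell g s j"
      "g' \<in> G" "s' \<in> S" "j' < d" "w' = copy_cell g' s' j'"
      using 1 by (elim copy_cells_cases)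
    then show ?thesis
      using copy_cell_prefix_unique[OF assms(1) _ _ _ _ _ _ assms(2)] assms(5,6) by metis
  next
    case 2
    then show ?thesis
      using outside_code_unique assms(5,6) by blast
  next
    case 3
    then show ?thesis
      using copy_cells_prefix_in_copies outside_code_not_in_copies assms(5,6) by blast
  next
    case 4
    then show ?thesis
      using copy_cells_prefix_in_copies outside_code_not_in_copies assms(5,6) by blast
  qed
qed

lemma prefix_code_copy_code:
  assumes "prefix_code m S"
  shows "prefix_code n (copy_code S)"
proof -
  have "finite (copy_cells S)"
    using assms finite_G by (simp add: copy_cells_def prefix_code_def)
  moreover have "copy_cells S \<subseteq> fwords n"
    using assms copy_cell_fwords by (auto simp: copy_cells_def prefix_code_def)
  ultimately show ?thesis
    using copy_code_cover[OF assms] copy_code_unique[OF assms] finite_outside_code outside_code_fwords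
    unfolding prefix_code_def copy_code_def by blast
qed

lemma bij_betw_comp_inv: "\<rho> \<in> G \<Longrightarrow> bij_betw (\<lambda>g. g \<circ> inv' \<rho>) G G"
  by (rule bij_betw_byWitness[where f' = "\<lambda>g. g \<circ> \<rho>"])
    (auto simp: comp_assoc G_inv_comp G_comp G_inv)

lemma copy_cells_relabel:
  assumes code: "prefix_code m (p ` {..<k})" and p: "inj_on p {..<k}"
    and L: "\<And>i. i < k \<Longrightarrow> bij_betw (L i) G G"
  shows "inj_on (\<lambda>(g, i, j). copy_cell (L i g) (p i) j) (G \<times> {..<k} \<times> {..<d})"
    and "(\<lambda>(g, i, j). copy_cell (L i g) (p i) j) ` (G \<times> {..<k} \<times> {..<d}) = copy_cells (p ` {..<k})"
proof -
  have LG: "L i g \<in> G" if "i < k" "g \<in> G" for i g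
    using L[OF that(1)] that(2) by (auto simp: bij_betw_def)
  show "inj_on (\<lambda>(g, i, j). copy_cell (L i g) (p i) j) (G \<times> {..<k} \<times> {..<d})"
  proof (rule inj_onI, clarsimp)
    fix g i j g' i' j'
    assume x: "g \<in> G" "i < k" "j < d" "g' \<in> G" "i' < k" "j' < d"
      and eq: "copy_cell (L i g) (p i) j = copy_cell (L i' g') (p i') j'"
    then have "L i g = L i' g' \<and> p i = p i' \<and> j = j'"
      using copy_cell_code_inj[OF code _ _ LG LG] by blast
    moreover then have "i = i'"
      using inj_onD[OF p] x by simp
    ultimately show "g = g' \<and> i = i' \<and> j = j'"
      using L[OF x(2)] x(1,4) by (auto simp: bij_betw_def inj_on_def)
  qed
  show "(\<lambda>(g, i, j). copy_cell (L i g) (p i) j) ` (G \<times> {..<k} \<times> {..<d}) = copy_cells (p ` {..<k})"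
  proof
    show "(\<lambda>(g, i, j). copy_cell (L i g) (p i) j) ` (G \<times> {..<k} \<times> {..<d}) \<subseteq> copy_cells (p ` {..<k})"
      using LG copy_cell_in_copy_cells by auto
  next
    show "copy_cells (p ` {..<k}) \<subseteq> (\<lambda>(g, i, j). copy_cell (L i g) (p i) j) ` (G \<times> {..<k} \<times> {..<d})"
    proof
      fix w assume "w \<in> copy_cells (p ` {..<k})"
      then obtain h i j where h: "h \<in> G" "i < k" "j < d" "w = copy_cell h (p i) j"
        by (elim copy_cells_cases) blast
      then obtain g where "g \<in> G" "L i g = h"
        using L[OF h(2)] by (metis bij_betw_iff_bijections)
      then show "w \<in> (\<lambda>(g, i, j). copy_cell (L i g) (p i) j) ` (G \<times> {..<k} \<times> {..<d})"
        using h by (intro image_eqI[of _ _ "(g, i, j)"]) auto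
    qed
  qed
qed

section \<open>Table entries\<close>

(* A table row p_i sigma_i(u) |-> q_i tau_i(u) gives the entry (p_i, q_i, tau_i o sigma_i^-1). *)

definition local_entry ::
  "((nat \<Rightarrow> nat) \<Rightarrow> nat \<Rightarrow> nat) \<Rightarrow> nat list \<Rightarrow> nat list \<Rightarrow> (nat \<Rightarrow> nat) \<Rightarrow> bool" where
  "local_entry f a b \<rho> \<longleftrightarrow> \<rho> \<in> G \<and> a \<in> fwords m \<and> b \<in> fwords m \<and>
     (\<forall>v\<in>cantor m. f (cat a v) = cat b (\<rho> \<circ> v))"

lemma local_entry_append:
  assumes "local_entry f a b \<rho>" "r \<in> fwords m"
  shows "local_entry f (a @ r) (b @ map \<rho> r) \<rho>"
proof -
  have "f (cat (a @ r) v) = cat (b @ map \<rho> r) (\<rho> \<circ> v)" if "v \<in> cantor m" for v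
    using assms(1) cat_in_cantor[OF assms(2) that] by (simp add: local_entry_def cat_append comp_cat)
  then show ?thesis
    using assms G_in_fwords by (auto simp: local_entry_def fwords_def)
qed

lemma local_entry_unique:
  assumes "local_entry f a b \<rho>" "local_entry f a b' \<rho>'"
  shows "b = b' \<and> \<rho> = \<rho>'"
proof -
  have "\<forall>v\<in>cantor m. cat b (\<rho> \<circ> v) = cat b' (\<rho>' \<circ> v)" "\<rho> \<in> G" "\<rho>' \<in> G"
    using assms by (simp_all add: local_entry_def)
  then show ?thesis
    using cat_permutes_cancel[OF G_permutes G_permutes two_le_m] by blast
qed

lemma local_entry_comp:
  assumes "local_entry f' a b \<rho>" "local_entry f b c \<rho>'"
  shows "local_entry (f \<circ> f') a c (\<rho>' \<circ> \<rho>)"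
  using assms G_comp G_in_cantor by (simp add: local_entry_def comp_assoc)

lemma local_entry_extend:
  assumes "local_entry f a b \<rho>" "is_prefix a z" "is_prefix a' z" "length a \<le> length a'" "a' \<in> fwords m"
  obtains b' where "local_entry f a' b' \<rho>" "length b' = length b + (length a' - length a)"
proof -
  define r where "r = drop (length a) a'"
  have "a' = a @ r"
    using is_prefix_append_drop[OF assms(2-4)] r_def by simp
  moreover have "r \<in> fwords m"
    using assms(5) by (auto simp: r_def fwords_def dest: in_set_dropD)
  ultimately have "local_entry f a' (b @ map \<rho> r) \<rho>"
    using local_entry_append[OF assms(1)] by simp
  moreover have "length (b @ map \<rho> r) = length b + (length a' - length a)"
    by (simp add: r_def)
  ultimately show ?thesis
    by (rule that)
qed

lemma Vset_local_table:
  assumes "f \<in> Vset m G"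
  obtains k :: nat and p q :: "nat \<Rightarrow> nat list" and \<rho> :: "nat \<Rightarrow> nat \<Rightarrow> nat"
  where "inj_on p {..<k}" "inj_on q {..<k}" "prefix_code m (p ` {..<k})" "prefix_code m (q ` {..<k})"
    "\<And>i. i < k \<Longrightarrow> local_entry f (p i) (q i) (\<rho> i)"
proof -
  obtain k :: nat and p q \<sigma> \<tau> where table: "inj_on p {..<k}" "inj_on q {..<k}"
    "prefix_code m (p ` {..<k})" "prefix_code m (q ` {..<k})" "\<forall>i<k. \<sigma> i \<in> G \<and> \<tau> i \<in> G"
    and f: "\<forall>i<k. \<forall>u\<in>cantor m. f (cat (p i) (\<sigma> i \<circ> u)) = cat (q i) (\<tau> i \<circ> u)"
    using assms unfolding Vset_def by blast
  have "local_entry f (p i) (q i) (\<tau> i \<circ> inv' (\<sigma> i))" if i: "i < k" for i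
  proof -
    have "f (cat (p i) v) = cat (q i) (\<tau> i \<circ> inv' (\<sigma> i) \<circ> v)" if v: "v \<in> cantor m" for v
    proof -
      have "\<sigma> i \<circ> (inv' (\<sigma> i) \<circ> v) = v"
        using G_inv_comp(1) table(5) i by (simp add: o_assoc)
      then show ?thesis
        using f i table(5) G_in_cantor[OF G_inv v] by (metis comp_assoc)
    qed
    moreover have "p i \<in> fwords m" "q i \<in> fwords m"
      using table(3,4) i by (auto simp: prefix_code_def)
    ultimately show ?thesis
      using table(5) i G_comp G_inv by (simp add: local_entry_def)
  qed
  then show ?thesis
    using that[OF table(1-4), of "\<lambda>i. \<tau> i \<circ> inv' (\<sigma> i)"] by blast
qed

lemma local_entry_at:
  assumes "f \<in> Vset m G" "z \<in> cantor m"
  obtains a b \<rho> where "local_entry f a b \<rho>" "is_prefix a z" "L \<le> length a" "L \<le> length b"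
proof -
  obtain k :: nat and p q \<rho> where code: "prefix_code m (p ` {..<k})"
    and entries: "\<And>i. i < k \<Longrightarrow> local_entry f (p i) (q i) (\<rho> i)"
    using Vset_local_table[OF assms(1)] by metis
  obtain i where i: "i < k" "is_prefix (p i) z"
    using code assms(2) unfolding prefix_code_def by blast
  define a where "a = map z [0..<length (p i) + L]"
  have a: "is_prefix a z" "length (p i) \<le> length a" "a \<in> fwords m"
    using assms(2) by (auto simp: a_def is_prefix_def cantor_def fwords_def)
  obtain b where "local_entry f a b (\<rho> i)" "length b = length (q i) + (length a - length (p i))"
    using local_entry_extend[OF entries[OF i(1)] i(2) a] .
  then show ?thesis
    using that a(1) by (simp add: a_def)
qed

section \<open>The embedding\<close>

definition transport ::
  "(nat \<Rightarrow> nat) \<Rightarrow> nat list \<Rightarrow> (nat \<Rightarrow> nat) \<Rightarrow> nat list \<Rightarrow> (nat \<Rightarrow> nat) \<Rightarrow> nat \<Rightarrow> nat" where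
  "transport g a h b y = cell_transfer d (copy_root g) (map g a) (copy_root h) (map h b) y"

lemma transport_copy_cell:
  "g \<in> G \<Longrightarrow> j < d \<Longrightarrow> is_prefix (copy_cell g a j) y \<Longrightarrow>
   transport g a h b y = cat (copy_cell h b j) (\<lambda>i. y (i + length (copy_cell g a j)))"
  unfolding transport_def copy_cell_def by (rule cell_transfer_eq[OF separated_copy_root d_pos])

lemma transport_append:
  assumes "in_copy g y" "\<rho> \<in> G" "a @ r \<in> fwords m" "is_prefix (a @ r) (decode g y)"
  shows "transport g (a @ r) (g \<circ> inv' \<rho>) (b @ map \<rho> r) y = transport g a (g \<circ> inv' \<rho>) b y"
proof -
  have "g \<circ> inv' \<rho> \<circ> \<rho> = g"
    using G_inv_comp(2)[OF assms(2)] by (simp add: comp_assoc)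
  then have mapped: "map (g \<circ> inv' \<rho>) (b @ map \<rho> r) = map (g \<circ> inv' \<rho>) b @ map g r"
    by simp
  obtain j where "j < d" "is_prefix (copy_cell g (a @ r) j) y"
    using copy_cell_prefix_iff[OF assms(1,3)] assms(4) by blast
  then show ?thesis
    using cell_transfer_append[OF separated_copy_root d_pos] assms(1)
    unfolding transport_def mapped by (simp add: copy_cell_def in_copy_def)
qed

lemma transport_well_defined:
  assumes "in_copy g y" "local_entry f a b \<rho>" "local_entry f a' b' \<rho>'"
    "is_prefix a (decode g y)" "is_prefix a' (decode g y)"
  shows "transport g a (g \<circ> inv' \<rho>) b y = transport g a' (g \<circ> inv' \<rho>') b' y"
proof -
  have shorter: "transport g a (g \<circ> inv' \<rho>) b y = transport g a' (g \<circ> inv' \<rho>') b' y"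
    if "local_entry f a b \<rho>" "local_entry f a' b' \<rho>'"
      "is_prefix a (decode g y)" "is_prefix a' (decode g y)" "length a \<le> length a'"
    for a b \<rho> a' b' \<rho>'
  proof -
    define r where "r = drop (length a) a'"
    have a': "a' = a @ r" and fw: "a @ r \<in> fwords m"
      using is_prefix_append_drop[OF that(3-5)] that(2) by (simp_all add: r_def local_entry_def)
    have "r \<in> fwords m"
      using fw by (simp add: fwords_def)
    then have "b' = b @ map \<rho> r \<and> \<rho>' = \<rho>"
      using local_entry_unique[OF that(2)] local_entry_append[OF that(1)] a' by metis
    then show ?thesis
      using transport_append[OF assms(1) _ fw] that(1,4) a' by (simp add: local_entry_def)
  qed
  show ?thesis
    using shorter[OF assms(2-5)] shorter[OF assms(3,2,5,4)] by (cases "length a \<le> length a'") auto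
qed

(* The choice is irrelevant by transport_well_defined. *)

definition lift :: "((nat \<Rightarrow> nat) \<Rightarrow> nat \<Rightarrow> nat) \<Rightarrow> (nat \<Rightarrow> nat) \<Rightarrow> nat \<Rightarrow> nat" where
  "lift f y = (if \<exists>g. in_copy g y then
     (SOME y'. \<exists>g a b \<rho>. in_copy g y \<and> local_entry f a b \<rho> \<and> is_prefix a (decode g y) \<and>
        y' = transport g a (g \<circ> inv' \<rho>) b y)
   else y)"

lemma lift_outside: "\<not> (\<exists>g. in_copy g y) \<Longrightarrow> lift f y = y"
  by (simp add: lift_def)

lemma lift_eq:
  assumes "in_copy g y" "local_entry f a b \<rho>" "is_prefix a (decode g y)"
  shows "lift f y = transport g a (g \<circ> inv' \<rho>) b y"
proof -
  have unique: "y' = transport g a (g \<circ> inv' \<rho>) b y"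
    if "in_copy g' y" "local_entry f a' b' \<rho>'" "is_prefix a' (decode g' y)"
      "y' = transport g' a' (g' \<circ> inv' \<rho>') b' y"
    for y' g' a' b' \<rho>'
  proof -
    have "g' = g"
      using in_copy_unique[OF assms(1) that(1)] by simp
    then show ?thesis
      using transport_well_defined[OF assms(1,2) that(2) assms(3)] that(3,4) by simp
  qed
  have copy: "\<exists>g. in_copy g y"
    using assms(1) by blast
  show ?thesis
    unfolding lift_def if_P[OF copy]
    by (rule someI2[where a = "transport g a (g \<circ> inv' \<rho>) b y"]) (use assms unique in blast)+
qed

lemma lift_copy_cell:
  assumes "g \<in> G" "local_entry f a b \<rho>" "j < d" "t \<in> cantor n"
  shows "lift f (cat (copy_cell g a j) t) = cat (copy_cell (g \<circ> inv' \<rho>) b j) t"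
proof -
  have a: "a \<in> fwords m"
    using assms(2) by (simp add: local_entry_def)
  note in_copy = in_copy_cat_copy_cell[OF assms(1) a assms(3,4)]
  show ?thesis
    using lift_eq[OF in_copy(1) assms(2) in_copy(2)] transport_copy_cell[OF assms(1,3) is_prefix_cat]
    by (simp add: suffix_cat)
qed

lemma lift_in_copy:
  assumes "in_copy g y" "local_entry f a b \<rho>" "is_prefix a (decode g y)"
  obtains j t where "j < d" "t \<in> cantor n" "y = cat (copy_cell g a j) t"
    "lift f y = cat (copy_cell (g \<circ> inv' \<rho>) b j) t"
proof -
  obtain j t where "j < d" "t \<in> cantor n" "y = cat (copy_cell g a j) t"
    using in_copy_split[OF assms(1) _ assms(3)] assms(2) by (auto simp: local_entry_def)
  then show ?thesis
    using that lift_copy_cell assms(1,2) by (simp add: in_copy_def)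
qed

lemma lift_decode_prefix:
  assumes "in_copy g y" "local_entry f a b \<rho>" "is_prefix a (decode g y)"
  shows "in_copy (g \<circ> inv' \<rho>) (lift f y)" "is_prefix b (decode (g \<circ> inv' \<rho>) (lift f y))"
proof -
  obtain j t where "j < d" "t \<in> cantor n" "lift f y = cat (copy_cell (g \<circ> inv' \<rho>) b j) t"
    using lift_in_copy[OF assms] by blast
  moreover have "g \<circ> inv' \<rho> \<in> G" "b \<in> fwords m"
    using assms(1,2) G_comp G_inv by (auto simp: in_copy_def local_entry_def)
  ultimately show "in_copy (g \<circ> inv' \<rho>) (lift f y)" "is_prefix b (decode (g \<circ> inv' \<rho>) (lift f y))"
    using in_copy_cat_copy_cell by simp_all
qed

lemma lift_comp:
  assumes f: "f \<in> Vset m G" and f': "f' \<in> Vset m G"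
  shows "lift (f \<circ> f') = lift f \<circ> lift f'"
proof
  fix y
  show "lift (f \<circ> f') y = (lift f \<circ> lift f') y"
  proof (cases "\<exists>g. in_copy g y")
    case False
    then show ?thesis by (simp add: lift_outside)
  next
    case True
    then obtain g where g: "in_copy g y" ..
    obtain a0 b0 \<rho>0 where "local_entry f' a0 b0 \<rho>0" "is_prefix a0 (decode g y)"
      using local_entry_at[OF f' decode_cantor[OF g]] by blast
    then have h: "in_copy (g \<circ> inv' \<rho>0) (lift f' y)"
      using lift_decode_prefix[OF g] by blast
    obtain a2 c2 \<rho>2 where e2: "local_entry f a2 c2 \<rho>2" "is_prefix a2 (decode (g \<circ> inv' \<rho>0) (lift f' y))"
      using local_entry_at[OF f decode_cantor[OF h]] by blast
    obtain a b \<rho> where e: "local_entry f' a b \<rho>" "is_prefix a (decode g y)" "length a2 \<le> length b"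
      using local_entry_at[OF f' decode_cantor[OF g]] by blast
    have "g \<circ> inv' \<rho> = g \<circ> inv' \<rho>0"
      using in_copy_unique[OF h lift_decode_prefix(1)[OF g e(1,2)]] by simp
    then have "is_prefix b (decode (g \<circ> inv' \<rho>0) (lift f' y))"
      using lift_decode_prefix(2)[OF g e(1,2)] by simp
    moreover have "b \<in> fwords m"
      using e(1) by (simp add: local_entry_def)
    ultimately obtain c where e': "local_entry f b c \<rho>2"
      using local_entry_extend[OF e2 _ e(3)] by blast
    obtain j t where jt: "j < d" "t \<in> cantor n" "y = cat (copy_cell g a j) t"
      "lift f' y = cat (copy_cell (g \<circ> inv' \<rho>) b j) t"
      using lift_in_copy[OF g e(1,2)] by blast
    have G: "g \<in> G" "\<rho> \<in> G" "\<rho>2 \<in> G"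
      using g e(1) e' by (simp_all add: in_copy_def local_entry_def)
    have "g \<circ> inv' (\<rho>2 \<circ> \<rho>) = (g \<circ> inv' \<rho>) \<circ> inv' \<rho>2"
      using G permutes_bij[OF G_permutes] by (simp add: o_inv_distrib comp_assoc)
    then show ?thesis
      using lift_copy_cell[OF G(1) local_entry_comp[OF e(1) e'] jt(1,2)]
        lift_copy_cell[OF G_comp[OF G(1) G_inv[OF G(2)]] e' jt(1,2)] jt(3,4)
      by simp
  qed
qed

lemma lift_determines_entry:
  assumes "local_entry f a b \<rho>" "local_entry f' a b' \<rho>'" "lift f = lift f'"
  shows "b = b' \<and> \<rho> = \<rho>'"
proof -
  have "copy_cell (inv' \<rho>) b j = copy_cell (inv' \<rho>') b' j" if "j < d" for j
  proof (rule cat_cancel[OF two_le_n], intro ballI)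
    fix t assume "t \<in> cantor n"
    then show "cat (copy_cell (inv' \<rho>) b j) t = cat (copy_cell (inv' \<rho>') b' j) t"
      using lift_copy_cell[OF id_in_G assms(1) that] lift_copy_cell[OF id_in_G assms(2) that] assms(3)
      by simp
  qed
  moreover have "\<rho> \<in> G" "\<rho>' \<in> G"
    using assms(1,2) by (simp_all add: local_entry_def)
  ultimately have "inv' \<rho> = inv' \<rho>' \<and> b = b'"
    using copy_cell_inj G_inv by blast
  moreover have "inv' (inv' \<rho>) = \<rho>" "inv' (inv' \<rho>') = \<rho>'"
    using permutes_bij[OF G_permutes] \<open>\<rho> \<in> G\<close> \<open>\<rho>' \<in> G\<close> by (simp_all add: inv_inv_eq)
  ultimately show ?thesis
    by metis
qed

lemma lift_inj:
  assumes f: "f \<in> Vset m G" and f': "f' \<in> Vset m G" and lift: "lift f = lift f'"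
  shows "f = f'"
proof
  fix z
  show "f z = f' z"
  proof (cases "z \<in> cantor m")
    case False
    then show ?thesis
      using Vset_outside[OF f] Vset_outside[OF f'] by simp
  next
    case True
    obtain a0 b0 \<rho> where e0: "local_entry f a0 b0 \<rho>" "is_prefix a0 z"
      using local_entry_at[OF f True] by blast
    obtain a b' \<rho>' where e': "local_entry f' a b' \<rho>'" "is_prefix a z" "length a0 \<le> length a"
      using local_entry_at[OF f' True] by blast
    moreover have "a \<in> fwords m"
      using e'(1) by (simp add: local_entry_def)
    ultimately obtain b where e: "local_entry f a b \<rho>"
      using local_entry_extend[OF e0] by blast
    define v where "v = (\<lambda>i. z (i + length a))"
    have z: "z = cat a v" and v: "v \<in> cantor m"
      using cat_prefix_suffix[OF e'(2)] True by (auto simp: v_def cantor_def)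
    have "b = b' \<and> \<rho> = \<rho>'"
      using lift_determines_entry[OF e e'(1) lift] .
    then show ?thesis
      using e e'(1) z v by (simp add: local_entry_def)
  qed
qed

lemma lift_in_Vset:
  assumes f: "f \<in> Vset m G"
  shows "lift f \<in> Vset n {id}"
proof -
  obtain k :: nat and p q \<rho> where table: "inj_on p {..<k}" "inj_on q {..<k}"
    "prefix_code m (p ` {..<k})" "prefix_code m (q ` {..<k})"
    and entries: "\<And>i. i < k \<Longrightarrow> local_entry f (p i) (q i) (\<rho> i)"
    using Vset_local_table[OF f] by metis
  have \<rho>: "\<rho> i \<in> G" if "i < k" for i
    using entries[OF that] by (simp add: local_entry_def)
  define A where "A = G \<times> {..<k} \<times> {..<d}"
  define P where "P = (\<lambda>(g, i, j). copy_cell g (p i) j)"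
  define Q where "Q = (\<lambda>(g, i, j). copy_cell (g \<circ> inv' (\<rho> i)) (q i) j)"
  define E where "E = (\<lambda>x. (P x, Q x)) ` A \<union> (\<lambda>c. (c, c)) ` outside_code"
  have P: "inj_on P A" "P ` A = copy_cells (p ` {..<k})"
    using copy_cells_relabel[OF table(3,1), of "\<lambda>_ g. g"] bij_betw_id[of G]
    unfolding P_def A_def id_def by simp_all
  have Q: "inj_on Q A" "Q ` A = copy_cells (q ` {..<k})"
    using copy_cells_relabel[OF table(4,2), of "\<lambda>i g. g \<circ> inv' (\<rho> i)"] bij_betw_comp_inv \<rho>
    unfolding Q_def A_def by simp_all
  have disjoint: "P ` A \<inter> outside_code = {}" "Q ` A \<inter> outside_code = {}"
    using copy_cells_outside_disjoint table(3,4) P(2) Q(2) by (simp_all add: prefix_code_def)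
  have "fst ` E = copy_code (p ` {..<k})" "snd ` E = copy_code (q ` {..<k})"
    unfolding E_def image_Un image_image copy_code_def P(2)[symmetric] Q(2)[symmetric] by simp_all
  then have codes: "prefix_code n (fst ` E)" "prefix_code n (snd ` E)"
    using prefix_code_copy_code table(3,4) by simp_all
  have finite: "finite E"
    using finite_G finite_outside_code by (simp add: E_def A_def)
  have inj: "inj_on fst E" "inj_on snd E"
    unfolding E_def using inj_on_fst_pairs_Un_diag[OF P(1) disjoint(1)]
      inj_on_snd_pairs_Un_diag[OF Q(1) disjoint(2)] .
  have outside: "lift f z = z" if "z \<notin> cantor n" for z
    using lift_outside that by (simp add: in_copy_def)
  have pairs: "lift f (cat x u) = cat y u" if "(x, y) \<in> E" "u \<in> cantor n" for x y u
  proof (cases rule: UnE[OF that(1)[unfolded E_def]])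
    case 1
    then obtain g i j where "g \<in> G" "i < k" "j < d" "x = copy_cell g (p i) j"
      "y = copy_cell (g \<circ> inv' (\<rho> i)) (q i) j"
      by (auto simp: A_def P_def Q_def)
    then show ?thesis
      using lift_copy_cell entries that(2) by simp
  next
    case 2
    then have "x \<in> outside_code" "y = x"
      by auto
    then have "\<not> in_copy g (cat x u)" for g
      using in_copy_in_copies outside_code_not_in_copies is_prefix_cat by blast
    then show ?thesis
      using lift_outside \<open>y = x\<close> by blast
  qed
  show ?thesis
    by (rule Vset_intro_pairs[OF finite inj codes _ pairs outside]) simp_all
qed

end

lemma mod_eq_obtain_Suc_mult:
  fixes m n :: nat
  assumes "2 \<le> m" "m \<le> n" "n mod (m - 1) = m mod (m - 1)"
  obtains d where "0 < d" "n = Suc (d * (m - 1))"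
proof -
  have "(m - 1) dvd (n - m)"
    using mod_eq_dvd_iff_nat[of m n "m - 1"] assms(2,3) by simp
  then have "(m - 1) dvd (n - m + (m - 1))"
    by simp
  moreover have "n - m + (m - 1) = n - 1"
    using assms(1,2) by simp
  ultimately obtain d where "n - 1 = (m - 1) * d"
    by (metis dvdE)
  then have "n = Suc (d * (m - 1))"
    using assms(1,2) by (simp add: mult.commute)
  moreover have "0 < d"
    using calculation assms(1,2) by (cases d) auto
  ultimately show ?thesis
    using that by blast
qed

theorem mainTheorem3:
  fixes m n :: nat and G :: "(nat \<Rightarrow> nat) set"
  assumes "2 \<le> m" and "m \<le> n" and "n mod (m - 1) = m mod (m - 1)"
    and "subgroup G (symA m)"
  shows "\<exists>H. subgroup H (symA n) \<and>
           (\<exists>\<phi>. \<phi> \<in> hom (Vgrp m G) (Vgrp n H) \<and> inj_on \<phi> (carrier (Vgrp m G)))"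
proof -
  obtain d where d: "0 < d" "n = Suc (d * (m - 1))"
    using mod_eq_obtain_Suc_mult[OF assms(1-3)] .
  obtain ix where ix: "bij_betw ix G {..<card G}"
    using ex_bij_betw_finite_nat[OF finite_subgroup_symA[OF assms(4)]] by (auto simp: lessThan_atLeast0)
  interpret copy_embedding m n d G ix
    by (rule copy_embedding.intro[OF cell_code.intro copy_embedding_axioms.intro]) (use assms d ix in auto)
  have "lift \<in> hom (Vgrp m G) (Vgrp n {id})"
    using lift_in_Vset lift_comp by (auto simp: hom_def Vgrp_def)
  moreover have "inj_on lift (carrier (Vgrp m G))"
    using lift_inj by (auto simp: Vgrp_def inj_on_def)
  ultimately show ?thesis
    using subgroup_trivial_symA by blast
qed

end
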